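(* Let $\mathscr{a}\in\mathbb{R}$, $\mathscr{b}\in(\mathscr{a},\infty)$, $\rho\in(0,\infty)$, $\alpha,\beta\in\mathbb{R}$, for $\theta=(\theta_1,\theta_2,\theta_3,\theta_4)\in\mathbb{R}^4$ and $x\in\mathbb{R}$ let $\mathscr{N}^\theta(x)=\theta_3\max\{\theta_1x+\theta_2,0\}+\theta_4$ and $\mathcal{L}(\theta)=\rho\int_{\mathscr{a}}^{\mathscr{b}}(\mathscr{N}^\theta(y)-(\alpha y+\beta))^2\,\mathrm{d}y$, and let $\theta\in\mathbb{R}^4$ satisfy $\mathcal{L}(\theta)<\frac{\rho\alpha^2(\mathscr{b}-\mathscr{a})^3}{12}$. Then $\alpha\theta_1\theta_3>0$. *)

theory Defs
  imports "HOL-Analysis.Analysis"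
begin

definition relu_net :: "real \<Rightarrow> real \<Rightarrow> real \<Rightarrow> real \<Rightarrow> real \<Rightarrow> real" where
  "relu_net t1 t2 t3 t4 x = t3 * max (t1 * x + t2) 0 + t4"

definition risk :: "real \<Rightarrow> real \<Rightarrow> real \<Rightarrow> real \<Rightarrow> real \<Rightarrow> real \<Rightarrow> real \<Rightarrow> real \<Rightarrow> real \<Rightarrow> real" where
  "risk a b rho alpha beta t1 t2 t3 t4 =
     rho * integral {a..b} (\<lambda>y. (relu_net t1 t2 t3 t4 y - (alpha * y + beta))^2)"

end

theory Submission
  imports Defs
begin

text \<open>If \<open>\<alpha> \<theta>\<^sub>1 \<theta>\<^sub>3 \<le> 0\<close>, the network moves away from its midpoint value \<open>N(m)\<close>, \<open>m = (a + b)/2\<close>,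
  in the direction opposite to the target \<open>\<alpha> y + \<beta>\<close>:
  \<open>\<alpha> (y - m) (N(y) - N(m)) \<le> 0\<close>. Writing the error as \<open>\<alpha> (y - m) + c - (N(y) - N(m))\<close> with the
  constant \<open>c = \<alpha> m + \<beta> - N(m)\<close>, its square is then at least \<open>\<alpha>\<^sup>2 (y - m)\<^sup>2 + 2 \<alpha> c (y - m)\<close>,
  whose integral over \<open>[a, b]\<close> is \<open>\<alpha>\<^sup>2 (b - a)\<^sup>3 / 12\<close> since the linear term integrates to zero.\<close>

lemma mono_diff_mult_nonneg:
  fixes f :: "real \<Rightarrow> real"
  assumes "mono f"
  shows "0 \<le> (u - v) * (f u - f v)"
  using monoD[OF assms, of u v] monoD[OF assms, of v u]
  by (cases "u \<le> v") (auto intro: mult_nonpos_nonpos)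

lemma relu_net_diff_opposite_slope:
  fixes alpha t1 t2 t3 t4 x y :: real
  assumes "\<not> alpha * t1 * t3 > 0"
  shows "alpha * (y - x) * (relu_net t1 t2 t3 t4 y - relu_net t1 t2 t3 t4 x) \<le> 0"
proof -
  define D where "D = max (t1 * y + t2) 0 - max (t1 * x + t2) 0"
  have "mono (\<lambda>u::real. max u 0)"
    by (rule monoI) simp
  from mono_diff_mult_nonneg[OF this, of "t1 * y + t2" "t1 * x + t2"]
  have relu_mono: "0 \<le> t1 * (y - x) * D"
    by (simp add: D_def algebra_simps)
  have "t1\<^sup>2 * (alpha * (y - x) * (t3 * D)) = (alpha * t1 * t3) * (t1 * (y - x) * D)"
    by (simp add: power2_eq_square algebra_simps)
  also have "\<dots> \<le> 0"
    using assms relu_mono by (simp add: mult_nonpos_nonneg)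
  finally have "alpha * (y - x) * (t3 * D) \<le> 0 \<or> t1 = 0"
    by (auto simp: mult_le_0_iff)
  then show ?thesis
    by (auto simp: relu_net_def D_def right_diff_distrib)
qed

lemma has_integral_midpoint_quadratic:
  fixes a b A B :: real
  assumes "a \<le> b"
  defines "m \<equiv> (a + b) / 2"
  shows "((\<lambda>y. A\<^sup>2 * (y - m)\<^sup>2 + B * (y - m)) has_integral A\<^sup>2 * (b - a) ^ 3 / 12) {a..b}"
proof -
  let ?F = "\<lambda>y. A\<^sup>2 * (y - m) ^ 3 / 3 + B * (y - m)\<^sup>2 / 2"
  have "((\<lambda>y. A\<^sup>2 * (y - m)\<^sup>2 + B * (y - m)) has_integral ?F b - ?F a) {a..b}"
  proof (rule fundamental_theorem_of_calculus[OF assms(1)])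
    fix x
    show "(?F has_vector_derivative A\<^sup>2 * (x - m)\<^sup>2 + B * (x - m)) (at x within {a..b})"
      unfolding has_real_derivative_iff_has_vector_derivative[symmetric]
      by (auto intro!: derivative_eq_intros simp: power2_eq_square field_simps)
  qed
  moreover have "?F b - ?F a = A\<^sup>2 * (b - a) ^ 3 / 12"
    unfolding m_def by (simp add: field_simps power2_eq_square power3_eq_cube)
  ultimately show ?thesis
    by simp
qed

lemma integral_affine_error_ge:
  fixes g :: "real \<Rightarrow> real" and a b alpha beta :: real
  assumes "a \<le> b" and "continuous_on {a..b} g"
    and opposite: "\<And>y. y \<in> {a..b} \<Longrightarrow> alpha * (y - (a + b) / 2) * (g y - g ((a + b) / 2)) \<le> 0"
  shows "alpha\<^sup>2 * (b - a) ^ 3 / 12 \<le> integral {a..b} (\<lambda>y. (g y - (alpha * y + beta))\<^sup>2)"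
proof -
  define m where "m = (a + b) / 2"
  define c where "c = alpha * m + beta - g m"
  have pointwise: "alpha\<^sup>2 * (y - m)\<^sup>2 + 2 * alpha * c * (y - m) \<le> (g y - (alpha * y + beta))\<^sup>2"
    if "y \<in> {a..b}" for y
  proof -
    have "alpha * (y - m) * (g y - g m) \<le> 0"
      using opposite[OF that] by (simp add: m_def)
    moreover have "0 \<le> (c - (g y - g m))\<^sup>2"
      by simp
    moreover have "(g y - (alpha * y + beta))\<^sup>2 = alpha\<^sup>2 * (y - m)\<^sup>2 + 2 * alpha * c * (y - m)
        - 2 * (alpha * (y - m) * (g y - g m)) + (c - (g y - g m))\<^sup>2"
      by (simp add: c_def power2_eq_square algebra_simps)
    ultimately show ?thesis
      by linarith
  qed
  have lower: "((\<lambda>y. alpha\<^sup>2 * (y - m)\<^sup>2 + 2 * alpha * c * (y - m))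
      has_integral alpha\<^sup>2 * (b - a) ^ 3 / 12) {a..b}"
    unfolding m_def using has_integral_midpoint_quadratic[OF assms(1)] .
  have "(\<lambda>y. (g y - (alpha * y + beta))\<^sup>2) integrable_on {a..b}"
    by (intro integrable_continuous_interval continuous_intros assms(2))
  from has_integral_le[OF lower integrable_integral[OF this] pointwise]
  show ?thesis .
qed

theorem corollary5p6:
  fixes a b rho alpha beta t1 t2 t3 t4 :: real
  assumes "a < b" and "rho > 0"
    and "risk a b rho alpha beta t1 t2 t3 t4 < rho * alpha^2 * (b - a)^3 / 12"
  shows "alpha * t1 * t3 > 0"
proof (rule ccontr)
  assume "\<not> alpha * t1 * t3 > 0"
  then have "alpha\<^sup>2 * (b - a) ^ 3 / 12
      \<le> integral {a..b} (\<lambda>y. (relu_net t1 t2 t3 t4 y - (alpha * y + beta))\<^sup>2)"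
    using assms(1)
    by (intro integral_affine_error_ge relu_net_diff_opposite_slope)
      (auto simp: relu_net_def intro!: continuous_intros)
  then have "rho * alpha\<^sup>2 * (b - a) ^ 3 / 12 \<le> risk a b rho alpha beta t1 t2 t3 t4"
    using assms(2) mult_left_mono[of _ _ rho] by (fastforce simp: risk_def)
  with assms(3) show False
    by simp
qed

end
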